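(* Every element of $F_\tau$ can be written as a product $$a_{i_1}a_{i_2}\cdots a_{i_n}\,b_{j_m}^{-1}\cdots b_{j_2}^{-1}b_{j_1}^{-1}$$ with $n,m\ge0$, where each $a_{i_k}\in\{x_{i_k},y_{i_k}\}$ and each $b_{j_k}\in\{x_{j_k},y_{j_k}\}$, and $i_1\le i_2\le\dots\le i_n$, $j_1\le j_2\le\dots\le j_m$.
   Context: Let $\tau=(\sqrt5-1)/2$. $F_\tau$ is the group, under composition, of orientation-preserving piecewise linear homeomorphisms of $[0,1]$ with finitely many breakpoints, all in $\mathbb{Z}[\tau]$, and slopes integer powers of $\tau$; $gh$ means first $g$ then $h$. Trees: finite rooted binary trees whose carets are each labelled $x$-type or $y$-type; the root corresponds to $[0,1]$, and at a vertex with interval $[p,p+\tau^k]$ an $x$-type caret gives children $[p,p+\tau^{k+2}]$, $[p+\tau^{k+2},p+\tau^k]$ while a $y$-type caret gives $[p,p+\tau^{k+1}]$, $[p+\tau^{k+1},p+\tau^k]$ (left, right). Leaves are numbered $0,1,\dots$ from left to right; a pair $(T_1,T_2)$ with equally many leaves represents the element mapping the $i$-th leaf interval of $T_1$ affinely increasingly onto that of $T_2$. A spine is a tree with only $x$-type carets, each non-root caret being the right child of its parent. $x_n$ ($n\ge0$) is represented by $(A,B)$, $B$ the spine with $n+2$ carets, $A$ the spine with $n+1$ carets with an $x$-type caret attached to leaf $n$; $y_n$ likewise with a $y$-type attached caret. *)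

theory Defs
  imports Complex_Main
begin

definition tau :: real where "tau = (sqrt 5 - 1) / 2"

definition Ztau :: "real set" where
  "Ztau = {of_int a + of_int b * tau | a b. True}"

definition F_tau :: "(real \<Rightarrow> real) set" where
  "F_tau = {f. (\<exists>ps :: real list. length ps \<ge> 2 \<and> sorted_wrt (<) ps \<and>
                 hd ps = 0 \<and> last ps = 1 \<and> set ps \<subseteq> Ztau \<and>
                 (\<forall>i < length ps - 1. \<exists>(k::int) (c::real).
                    \<forall>t \<in> {ps ! i .. ps ! (i+1)}. f t = tau powi k * t + c))
              \<and> continuous_on {0..1} f \<and> strict_mono_on {0..1} f \<and> f ` {0..1} = {0..1}
              \<and> (\<forall>t. t \<notin> {0..1} \<longrightarrow> f t = t)}"

datatype ctree = Leaf | XC ctree ctree | YC ctree ctree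

text \<open>Leaf intervals, left to right; (p,k) denotes [p, p + tau^k].\<close>
fun leaves :: "ctree \<Rightarrow> real \<Rightarrow> int \<Rightarrow> (real \<times> int) list" where
  "leaves Leaf p k = [(p, k)]"
| "leaves (XC l r) p k = leaves l p (k+2) @ leaves r (p + tau powi (k+2)) (k+1)"
| "leaves (YC l r) p k = leaves l p (k+1) @ leaves r (p + tau powi (k+1)) (k+2)"

fun nleaves :: "ctree \<Rightarrow> nat" where
  "nleaves Leaf = 1"
| "nleaves (XC l r) = nleaves l + nleaves r"
| "nleaves (YC l r) = nleaves l + nleaves r"

text \<open>Replace the i-th leaf (numbered from 0, left to right) by the tree S.\<close>
fun replace_leaf :: "ctree \<Rightarrow> nat \<Rightarrow> ctree \<Rightarrow> ctree" where
  "replace_leaf Leaf i S = (if i = 0 then S else Leaf)"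
| "replace_leaf (XC l r) i S = (if i < nleaves l then XC (replace_leaf l i S) r
                                else XC l (replace_leaf r (i - nleaves l) S))"
| "replace_leaf (YC l r) i S = (if i < nleaves l then YC (replace_leaf l i S) r
                                else YC l (replace_leaf r (i - nleaves l) S))"

fun spine :: "nat \<Rightarrow> ctree" where
  "spine 0 = Leaf"
| "spine (Suc c) = XC Leaf (spine c)"

definition tree_elem :: "ctree \<Rightarrow> ctree \<Rightarrow> real \<Rightarrow> real" where
  "tree_elem T1 T2 t =
     (let L1 = leaves T1 0 0; L2 = leaves T2 0 0 in
      if \<exists>i < length L1. fst (L1!i) \<le> t \<and> t \<le> fst (L1!i) + tau powi snd (L1!i)
      then (let i = (LEAST i. i < length L1 \<and> fst (L1!i) \<le> t \<and> t \<le> fst (L1!i) + tau powi snd (L1!i))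
            in fst (L2!i) + tau powi (snd (L2!i) - snd (L1!i)) * (t - fst (L1!i)))
      else t)"

definition xgen :: "nat \<Rightarrow> real \<Rightarrow> real" where
  "xgen n = tree_elem (replace_leaf (spine (n+1)) n (XC Leaf Leaf)) (spine (n+2))"

definition ygen :: "nat \<Rightarrow> real \<Rightarrow> real" where
  "ygen n = tree_elem (replace_leaf (spine (n+1)) n (YC Leaf Leaf)) (spine (n+2))"

definition gen :: "bool \<times> nat \<Rightarrow> real \<Rightarrow> real" where
  "gen a = (if fst a then xgen (snd a) else ygen (snd a))"

text \<open>Product of a word, with the convention gh = first g then h.\<close>
fun gprod :: "(real \<Rightarrow> real) list \<Rightarrow> real \<Rightarrow> real" where
  "gprod [] = id"
| "gprod (g # gs) = gprod gs \<circ> g"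

end

(*
  A list e of integers encodes the subdivision of [0, width e] into consecutive
  pieces of lengths tau^(e!i); two lists of equal length and width 1 determine the piecewise
  linear map pl_map e1 e2 of [0,1] sending the pieces of e1 affinely onto those of e2.  Every
  element of F_tau is such a map, because each positive element of Z[tau] is a sum of powers
  of tau.  The generators x_n, y_n are the maps between two subdivisions that differ by one
  caret, and subdividing corresponding pieces on both sides does not change a map.  Hence
  pl_map e (spine) changes by an element of the group generated by the x_n, y_n whenever a
  piece of e is split by a caret; splitting all pieces down to two levels N, N + 1 and sorting
  them with the move [N + 1, N] ~ [N - 1] ~ [N, N + 1] connects e with the trivial subdivision
  [0], the counts of N and N + 1 being determined by the width because tau is irrational.
  So the x_n, y_n generate F_tau.  Finally, the relations
  x_k^-1 g_n x_k = g_(n+1) (k < n, g in {x, y}) and y_k^2 = x_k x_(k+1) allow a generator to be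
  pushed through a word P N^-1, with P and N sorted positive words, keeping that form.

  Products are written with \<circ>, so the paper's product gh ("first g, then h") is h \<circ> g.
*)

theory Submission
  imports Defs
begin

section \<open>Powers of tau\<close>

lemma tau_pos: "0 < tau"
  unfolding tau_def by (simp add: real_less_rsqrt)

lemma tau_less_1: "tau < 1"
proof -
  have "sqrt 5 < sqrt 9" by (rule real_sqrt_less_mono) simp
  then show ?thesis unfolding tau_def by simp
qed

lemma tau_squared_add_tau: "tau * tau + tau = 1"
  unfolding tau_def by (simp add: field_simps algebra_simps)

text \<open>Irrationality of \<open>tau\<close>, by descent: \<open>p = tau q\<close> implies \<open>q - p = tau p\<close>
  with \<open>\<bar>p\<bar> < \<bar>q\<bar>\<close>.\<close>

lemma tau_times_int_eq_int_imp_zero: "real_of_int p = tau * real_of_int q \<Longrightarrow> q = 0"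
proof (induction "nat \<bar>q\<bar>" arbitrary: p q rule: less_induct)
  case less
  show ?case
  proof (rule ccontr)
    assume "q \<noteq> 0"
    have "\<bar>real_of_int p\<bar> = tau * \<bar>real_of_int q\<bar>" using less.prems tau_pos by (simp add: abs_mult)
    also have "\<dots> < \<bar>real_of_int q\<bar>" using \<open>q \<noteq> 0\<close> tau_less_1 by simp
    finally have "\<bar>p\<bar> < \<bar>q\<bar>" by linarith
    moreover have "real_of_int (q - p) = tau * real_of_int p"
    proof -
      have "real_of_int (q - p) = real_of_int q * (1 - tau)" using less.prems
        by (simp add: algebra_simps)
      also have "1 - tau = tau * tau" using tau_squared_add_tau by simp
      finally show ?thesis using less.prems by simp
    qed
    ultimately have "p = 0" using less.hyps[of p "q - p"] by simp
    then show False using less.prems \<open>q \<noteq> 0\<close> tau_pos by simp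
  qed
qed

definition tau_pow :: "int \<Rightarrow> real" where
  "tau_pow k = tau powi k"

lemma tau_pow_pos: "0 < tau_pow k"
  unfolding tau_pow_def using tau_pos by simp

lemma tau_pow_add: "tau_pow (k + l) = tau_pow k * tau_pow l"
  unfolding tau_pow_def using tau_pos by (simp add: power_int_add)

lemma tau_pow_0 [simp]: "tau_pow 0 = 1"
  by (simp add: tau_pow_def)

lemma tau_pow_1 [simp]: "tau_pow 1 = tau"
  by (simp add: tau_pow_def)

lemma tau_pow_split: "tau_pow (k + 1) + tau_pow (k + 2) = tau_pow k"
proof -
  have "tau_pow (k + 1) + tau_pow (k + 2) = tau_pow k * (tau_pow 1 + tau_pow 2)"
    by (simp add: tau_pow_add distrib_left)
  also have "tau_pow 1 + tau_pow 2 = 1"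
    using tau_squared_add_tau by (simp add: tau_pow_def power2_eq_square)
  finally show ?thesis by simp
qed

lemma tau_pow_diff_mult: "tau_pow (l - k) * tau_pow k = tau_pow l"
  using tau_pow_add[of "l - k" k] by simp

section \<open>Subdivisions and their piecewise linear maps\<close>

definition width :: "int list \<Rightarrow> real" where
  "width e = sum_list (map tau_pow e)"

definition offset :: "int list \<Rightarrow> nat \<Rightarrow> real" where
  "offset e i = width (take i e)"

definition piece :: "int list \<Rightarrow> nat \<Rightarrow> real set" where
  "piece e i = {offset e i .. offset e (Suc i)}"

lemma width_simps [simp]:
  "width [] = 0" "width (k # e) = tau_pow k + width e" "width (u @ v) = width u + width v"
  by (simp_all add: width_def)

lemma width_replicate [simp]: "width (replicate n k) = real n * tau_pow k"
  by (induction n) (simp_all add: algebra_simps)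

lemma width_shift: "width (map ((+) k) e) = tau_pow k * width e"
  by (induction e) (simp_all add: tau_pow_add algebra_simps)

lemma width_nonneg: "0 \<le> width e"
  unfolding width_def by (rule sum_list_nonneg) (auto intro: less_imp_le tau_pow_pos)

lemma offset_0 [simp]: "offset e 0 = 0"
  by (simp add: offset_def)

lemma offset_Cons_Suc [simp]: "offset (k # e) (Suc i) = tau_pow k + offset e i"
  by (simp add: offset_def)

lemma offset_Suc: "i < length e \<Longrightarrow> offset e (Suc i) = offset e i + tau_pow (e ! i)"
  by (simp add: offset_def take_Suc_conv_app_nth)

lemma offset_length [simp]: "offset e (length e) = width e"
  by (simp add: offset_def)

lemma offset_append:
  "offset (u @ v) i = (if i \<le> length u then offset u i else width u + offset v (i - length u))"
  by (simp add: offset_def)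

lemma offset_append_left [simp]: "i \<le> length u \<Longrightarrow> offset (u @ v) i = offset u i"
  by (simp add: offset_append)

lemma offset_append_right [simp]: "offset (u @ v) (length u + i) = width u + offset v i"
  by (simp add: offset_append)

lemma offset_append_append:
  "m \<le> length v \<Longrightarrow> offset (u @ v @ w) (length u + m) = width u + offset v m"
  "offset (u @ v @ w) (length u + length v + m) = width u + width v + offset w m"
  using offset_append_right[of u "v @ w"] offset_append_right[of v w m] by (simp_all add: add.assoc)

lemma offset_shift: "offset (map ((+) k) e) i = tau_pow k * offset e i"
  by (simp add: offset_def width_shift take_map)

lemma offset_nonneg: "0 \<le> offset e i"
  by (simp add: offset_def width_nonneg)

lemma offset_le_width: "offset e i \<le> width e"
proof -
  have "width e = offset e i + width (drop i e)"
    by (metis append_take_drop_id offset_def width_simps(3))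
  then show ?thesis using width_nonneg[of "drop i e"] by simp
qed

lemma offset_mono: "i \<le> j \<Longrightarrow> offset e i \<le> offset e j"
proof -
  assume "i \<le> j"
  then have "take j e = take i e @ take (j - i) (drop i e)"
    by (metis le_add_diff_inverse take_add)
  then show ?thesis using width_nonneg[of "take (j - i) (drop i e)"] by (simp add: offset_def)
qed

lemma offset_strict_mono: "i < j \<Longrightarrow> j \<le> length e \<Longrightarrow> offset e i < offset e j"
  using offset_mono[of "Suc i" j e] offset_Suc[of i e] tau_pow_pos[of "e ! i"] by simp

lemma piece_subset: "piece e i \<subseteq> {0 .. width e}"
  unfolding piece_def using offset_nonneg[of e i] offset_le_width[of e "Suc i"] by auto

lemma pieces_cover:
  assumes "e \<noteq> []" "t \<in> {0 .. width e}"
  shows "\<exists>i < length e. t \<in> piece e i"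
  using assms
proof (induction e arbitrary: t)
  case (Cons k e)
  show ?case
  proof (cases "t \<le> tau_pow k")
    case True
    then show ?thesis using Cons.prems by (auto simp: piece_def intro: exI[of _ 0])
  next
    case False
    then have "e \<noteq> []" "t - tau_pow k \<in> {0 .. width e}" using Cons.prems by auto
    then obtain i where "i < length e" "t - tau_pow k \<in> piece e i" using Cons.IH by blast
    then show ?thesis by (auto simp: piece_def intro!: exI[of _ "Suc i"])
  qed
qed simp

text \<open>A point shared by two pieces is mapped by the formula of the left one; both formulas
  agree there.\<close>

definition pl_map :: "int list \<Rightarrow> int list \<Rightarrow> real \<Rightarrow> real" where
  "pl_map e1 e2 t =
     (if \<exists>i < length e1. t \<in> piece e1 i
      then let i = LEAST i. i < length e1 \<and> t \<in> piece e1 i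
           in offset e2 i + tau_pow (e2 ! i - e1 ! i) * (t - offset e1 i)
      else t)"

lemma pl_map_on_piece:
  assumes len: "length e2 = length e1" and i: "i < length e1" and t: "t \<in> piece e1 i"
  shows "pl_map e1 e2 t = offset e2 i + tau_pow (e2 ! i - e1 ! i) * (t - offset e1 i)"
proof -
  define j where "j = (LEAST j. j < length e1 \<and> t \<in> piece e1 j)"
  have j: "j < length e1" "t \<in> piece e1 j" "j \<le> i"
    using LeastI[of "\<lambda>j. j < length e1 \<and> t \<in> piece e1 j" i] Least_le[of _ i] i t
    unfolding j_def by auto
  have value_j: "pl_map e1 e2 t = offset e2 j + tau_pow (e2 ! j - e1 ! j) * (t - offset e1 j)"
    unfolding pl_map_def j_def[symmetric] using i t by auto
  show ?thesis
  proof (cases "j = i")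
    case False
    have "\<not> Suc j < i"
      using offset_strict_mono[of "Suc j" i e1] i j t by (auto simp: piece_def)
    then have i_eq: "i = Suc j" using False j(3) by simp
    then have t_eq: "t = offset e1 i" using j t by (auto simp: piece_def)
    show ?thesis
      using value_j len j(1) tau_pow_diff_mult[of "e2 ! j" "e1 ! j"]
      by (simp add: i_eq t_eq offset_Suc)
  qed (use value_j in simp)
qed

lemma pl_map_outside:
  assumes "width e1 = 1" "t \<notin> {0..1}"
  shows "pl_map e1 e2 t = t"
proof -
  have "t \<notin> piece e1 i" for i using assms piece_subset[of e1 i] by auto
  then show ?thesis unfolding pl_map_def by simp
qed

lemma pl_map_eqI:
  assumes len: "length e2 = length e1" and w: "width e1 = 1"
    and outside: "\<And>t. t \<notin> {0..1} \<Longrightarrow> g t = t"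
    and on_piece: "\<And>i t. i < length e1 \<Longrightarrow> t \<in> piece e1 i \<Longrightarrow>
                     g t = offset e2 i + tau_pow (e2 ! i - e1 ! i) * (t - offset e1 i)"
  shows "g = pl_map e1 e2"
proof
  fix t
  show "g t = pl_map e1 e2 t"
  proof (cases "t \<in> {0..1}")
    case True
    then obtain i where "i < length e1" "t \<in> piece e1 i"
      using pieces_cover[of e1 t] w by fastforce
    then show ?thesis using on_piece pl_map_on_piece[OF len] by simp
  qed (simp add: outside pl_map_outside[OF w])
qed

lemma pl_map_piece_to_piece:
  assumes "length e2 = length e1" "i < length e1" "t \<in> piece e1 i"
  shows "pl_map e1 e2 t \<in> piece e2 i"
proof -
  have "tau_pow (e2 ! i - e1 ! i) * (t - offset e1 i)
      \<le> tau_pow (e2 ! i - e1 ! i) * tau_pow (e1 ! i)"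
    using assms tau_pow_pos[of "e2 ! i - e1 ! i"]
    by (intro mult_left_mono) (auto simp: piece_def offset_Suc)
  then show ?thesis
    using assms tau_pow_pos[of "e2 ! i - e1 ! i"] tau_pow_diff_mult[of "e2 ! i" "e1 ! i"]
    by (auto simp: pl_map_on_piece piece_def offset_Suc)
qed

lemma pl_map_comp:
  assumes l2: "length e2 = length e1" and l3: "length e3 = length e1"
    and w1: "width e1 = 1" and w2: "width e2 = 1"
  shows "pl_map e2 e3 \<circ> pl_map e1 e2 = pl_map e1 e3"
proof (rule pl_map_eqI[OF l3 w1])
  show "(pl_map e2 e3 \<circ> pl_map e1 e2) t = t" if "t \<notin> {0..1}" for t
    using that by (simp add: pl_map_outside w1 w2)
next
  fix i t assume i: "i < length e1" and t: "t \<in> piece e1 i"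
  have "pl_map e2 e3 (pl_map e1 e2 t)
      = offset e3 i + tau_pow (e3 ! i - e2 ! i) * (tau_pow (e2 ! i - e1 ! i) * (t - offset e1 i))"
    using pl_map_piece_to_piece[OF l2 i t] pl_map_on_piece[OF l2 i t] pl_map_on_piece[of e3 e2 i]
      l2 l3 i
    by simp
  also have "\<dots> = offset e3 i + tau_pow (e3 ! i - e1 ! i) * (t - offset e1 i)"
    using tau_pow_add[of "e3 ! i - e2 ! i" "e2 ! i - e1 ! i"] by simp
  finally show "(pl_map e2 e3 \<circ> pl_map e1 e2) t = \<dots>" by simp
qed

lemma pl_map_self: "width e = 1 \<Longrightarrow> pl_map e e = id"
  by (rule pl_map_eqI[symmetric]) simp_all

lemma
  assumes "length e2 = length e1" "width e1 = 1" "width e2 = 1"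
  shows bij_pl_map: "bij (pl_map e1 e2)"
    and inv_pl_map: "inv (pl_map e1 e2) = pl_map e2 e1"
proof -
  have "pl_map e2 e1 \<circ> pl_map e1 e2 = id" "pl_map e1 e2 \<circ> pl_map e2 e1 = id"
    using pl_map_comp pl_map_self assms by simp_all
  then show "bij (pl_map e1 e2)" "inv (pl_map e1 e2) = pl_map e2 e1"
    by (simp_all add: o_bij inv_unique_comp)
qed

lemma pl_map_on_piece_rebased:
  assumes "length e2 = length e1" "i < length e1" "t \<in> piece e1 i"
  shows "pl_map e1 e2 t = offset e2 i + tau_pow (e2 ! i) * x
           + tau_pow (e2 ! i - e1 ! i) * (t - (offset e1 i + tau_pow (e1 ! i) * x))"
  using pl_map_on_piece[OF assms] tau_pow_diff_mult[of "e2 ! i" "e1 ! i"] by (simp add: algebra_simps)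

lemma less_length_append3_cases:
  assumes "i < length u + length v + length w"
  obtains "i < length u" | j where "i = length u + j" "j < length v"
    | k where "i = length u + length v + k" "k < length w"
proof (cases "i < length u + length v")
  case True
  then show ?thesis using that(1) that(2)[of "i - length u"] by (cases "i < length u") auto
next
  case False
  then show ?thesis using that(3)[of "i - length u - length v"] assms by auto
qed

lemma pl_map_refine:
  assumes lu: "length u2 = length u1" and lw: "length w2 = length w1"
    and w: "width (u1 @ a # w1) = 1" and ws: "width s = 1"
  shows "pl_map (u1 @ map ((+) a) s @ w1) (u2 @ map ((+) b) s @ w2)
    = pl_map (u1 @ a # w1) (u2 @ b # w2)"
    (is "pl_map ?f1 ?f2 = pl_map ?e1 ?e2")
proof (rule pl_map_eqI[symmetric])
  have len: "length ?e2 = length ?e1" using lu lw by simp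
  show "length ?f2 = length ?f1" using lu lw by simp
  show "width ?f1 = 1" using w ws by (simp add: width_shift)
  show "pl_map ?e1 ?e2 t = t" if "t \<notin> {0..1}" for t using pl_map_outside[OF w that] .
  fix i t assume i: "i < length ?f1" and t: "t \<in> piece ?f1 i"
  define n where "n = length u1"
  note offsets = offset_append_append[where u = u1, folded n_def]
    offset_append_append[where u = u2, unfolded lu, folded n_def]
  from i have "i < length u1 + length (map ((+) a) s) + length w1" by simp
  then show "pl_map ?e1 ?e2 t = offset ?f2 i + tau_pow (?f2 ! i - ?f1 ! i) * (t - offset ?f1 i)"
  proof (cases rule: less_length_append3_cases)
    case 1
    then have "t \<in> piece ?e1 i" using t by (simp add: piece_def)
    then show ?thesis using pl_map_on_piece[OF len, of i t] 1 lu by (simp add: nth_append)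
  next
    case (2 j)
    have "0 \<le> tau_pow a * offset s j" "tau_pow a * offset s (Suc j) \<le> tau_pow a"
      using tau_pow_pos[of a] offset_nonneg[of s j] offset_le_width[of s "Suc j"] ws
      by (simp_all add: mult_left_le)
    moreover have "offset ?e1 n = width u1" "offset ?e1 (Suc n) = width u1 + tau_pow a"
      using offsets(1)[of 0 "[a]"] offsets(1)[of 1 "[a]"] by simp_all
    ultimately have "t \<in> piece ?e1 n"
      using t 2 offsets(1)[of j] offsets(1)[of "Suc j"] by (auto simp: piece_def offset_shift n_def)
    moreover have "n < length ?e1" "?e1 ! n = a" "?e2 ! n = b" "offset ?e2 n = width u2"
      using offsets(3)[of 0 "[b]"] by (simp_all add: n_def nth_append flip: lu)
    ultimately show ?thesis
      using pl_map_on_piece_rebased[OF len, of n t "offset s j"] 2 lu offsets(1)[of j] offsets(3)[of j]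
        \<open>offset ?e1 n = width u1\<close>
      by (simp add: n_def nth_append offset_shift)
  next
    case (3 k)
    have same_offsets: "offset ?f1 (n + length s + m) = offset ?e1 (n + 1 + m)"
      "offset ?f2 (n + length s + m) = offset ?e2 (n + 1 + m)" for m
      using offsets(2)[of "map ((+) a) s" w1 m] offsets(2)[of "[a]" w1 m]
        offsets(4)[of "map ((+) b) s" w2 m] offsets(4)[of "[b]" w2 m] ws
      by (simp_all add: width_shift)
    moreover have "?f1 ! i = ?e1 ! (n + 1 + k)" "?f2 ! i = ?e2 ! (n + 1 + k)"
      using 3 lu by (simp_all add: n_def nth_append)
    moreover have "t \<in> piece ?e1 (n + 1 + k)"
      using t 3 same_offsets(1)[of k] same_offsets(1)[of "Suc k"] by (simp add: piece_def n_def)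
    ultimately show ?thesis
      using 3 pl_map_on_piece[OF len, of "n + 1 + k" t] by (simp add: n_def)
  qed
qed

section \<open>Carets, tree pairs and the generators\<close>

definition caret_exps :: "bool \<Rightarrow> int \<Rightarrow> int list" where
  "caret_exps c k = (if c then [k + 2, k + 1] else [k + 1, k + 2])"

lemma caret_exps_shift: "caret_exps c k = map ((+) k) (caret_exps c 0)"
  by (simp add: caret_exps_def add.commute)

lemma width_caret_exps [simp]: "width (caret_exps c k) = tau_pow k"
  using tau_pow_split[of k] by (auto simp: caret_exps_def)

lemma length_caret_exps [simp]: "length (caret_exps c k) = 2"
  by (simp add: caret_exps_def)

definition split_at :: "bool \<Rightarrow> nat \<Rightarrow> int list \<Rightarrow> int list" where
  "split_at c j e = take j e @ caret_exps c (e ! j) @ drop (Suc j) e"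

lemma split_at_append_Cons: "length u = j \<Longrightarrow> split_at c j (u @ k # w) = u @ caret_exps c k @ w"
  by (auto simp: split_at_def)

lemma split_at_eq_append_Cons:
  assumes "j < length e"
  obtains u k w where "e = u @ k # w" "length u = j" "split_at c j e = u @ caret_exps c k @ w"
  using id_take_nth_drop[OF assms]
  by (intro that[of "take j e" "e ! j" "drop (Suc j) e"]) (auto simp: assms split_at_def)

lemma length_split_at [simp]: "j < length e \<Longrightarrow> length (split_at c j e) = Suc (length e)"
  by (simp add: split_at_def)

lemma width_split_at [simp]: "j < length e \<Longrightarrow> width (split_at c j e) = width e"
  by (metis split_at_eq_append_Cons width_caret_exps width_simps(2,3))

lemma pl_map_split_at:
  assumes "j < length e1" "length e2 = length e1" "width e1 = 1"
  shows "pl_map (split_at c j e1) (split_at c j e2) = pl_map e1 e2"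
proof -
  obtain u1 k1 w1 where e1: "e1 = u1 @ k1 # w1" "length u1 = j"
    "split_at c j e1 = u1 @ caret_exps c k1 @ w1"
    using split_at_eq_append_Cons assms(1) by blast
  have "j < length e2" using assms by simp
  then obtain u2 k2 w2 where e2: "e2 = u2 @ k2 # w2" "length u2 = j"
    "split_at c j e2 = u2 @ caret_exps c k2 @ w2"
    using split_at_eq_append_Cons by blast
  show ?thesis
    using pl_map_refine[of u2 u1 w2 w1 k1 "caret_exps c 0" k2] e1 e2 assms
    by (simp flip: caret_exps_shift)
qed

lemma split_at_commute:
  assumes "k < n" "n < length e"
  shows "split_at t k (split_at s n e) = split_at s (Suc n) (split_at t k e)"
proof -
  have "k < length e" using assms by simp
  then obtain u a v where e: "e = u @ a # v" "length u = k"
    using split_at_eq_append_Cons by blast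
  have "n - Suc k < length v" using assms e by auto
  then obtain v1 b w where v: "v = v1 @ b # w" "length v1 = n - Suc k"
    using split_at_eq_append_Cons by blast
  have "split_at t k (split_at s n e) = u @ caret_exps t a @ v1 @ caret_exps s b @ w"
    using split_at_append_Cons[of "u @ a # v1" n s b w] split_at_append_Cons[of u k t a] assms e v
    by simp
  moreover have "split_at s (Suc n) (split_at t k e) = u @ caret_exps t a @ v1 @ caret_exps s b @ w"
    using split_at_append_Cons[of u k t a v]
      split_at_append_Cons[of "u @ caret_exps t a @ v1" "Suc n" s b w]
      assms e v by simp
  ultimately show ?thesis by simp
qed

lemma split_at_y_twice:
  assumes "k < length e"
  shows "split_at False k (split_at False k e) = split_at True (Suc k) (split_at True k e)"
proof -
  obtain u a w where e: "e = u @ a # w" "length u = k"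
    using split_at_eq_append_Cons[OF assms] by blast
  have "split_at False k (split_at False k e) = u @ [a + 2, a + 3, a + 2] @ w"
    using e split_at_append_Cons[of u k False "a + 1" "(a + 2) # w"]
    by (simp add: split_at_append_Cons caret_exps_def)
  moreover have "split_at True (Suc k) (split_at True k e) = u @ [a + 2, a + 3, a + 2] @ w"
    using e split_at_append_Cons[of "u @ [a + 2]" "Suc k" True "a + 1" w]
    by (simp add: split_at_append_Cons caret_exps_def)
  ultimately show ?thesis by simp
qed

fun leaf_exps :: "ctree \<Rightarrow> int \<Rightarrow> int list" where
  "leaf_exps Leaf k = [k]"
| "leaf_exps (XC l r) k = leaf_exps l (k + 2) @ leaf_exps r (k + 1)"
| "leaf_exps (YC l r) k = leaf_exps l (k + 1) @ leaf_exps r (k + 2)"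

fun intervals :: "real \<Rightarrow> int list \<Rightarrow> (real \<times> int) list" where
  "intervals p [] = []"
| "intervals p (k # e) = (p, k) # intervals (p + tau_pow k) e"

lemma intervals_append: "intervals p (u @ v) = intervals p u @ intervals (p + width u) v"
  by (induction u arbitrary: p) (simp_all add: add.assoc)

lemma length_intervals [simp]: "length (intervals p e) = length e"
  by (induction e arbitrary: p) simp_all

lemma nth_intervals: "i < length e \<Longrightarrow> intervals p e ! i = (p + offset e i, e ! i)"
  by (induction e arbitrary: p i) (auto simp: nth_Cons split: nat.split)

lemma length_leaf_exps [simp]: "length (leaf_exps T k) = nleaves T"
  by (induction T arbitrary: k) simp_all

lemma width_leaf_exps [simp]: "width (leaf_exps T k) = tau_pow k"
  by (induction T arbitrary: k) (simp_all add: tau_pow_split add.commute[of "tau_pow (_ + 2)"])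

lemma leaves_eq_intervals: "leaves T p k = intervals p (leaf_exps T k)"
  by (induction T arbitrary: p k) (simp_all add: intervals_append tau_pow_def)

lemma pl_map_via_intervals:
  assumes len: "length e2 = length e1"
  shows "pl_map e1 e2 t =
     (let L1 = intervals 0 e1; L2 = intervals 0 e2 in
      if \<exists>i < length L1. fst (L1!i) \<le> t \<and> t \<le> fst (L1!i) + tau powi snd (L1!i)
      then (let i = (LEAST i. i < length L1 \<and> fst (L1!i) \<le> t \<and> t \<le> fst (L1!i) + tau powi snd (L1!i))
            in fst (L2!i) + tau powi (snd (L2!i) - snd (L1!i)) * (t - fst (L1!i)))
      else t)"
proof -
  have in_piece: "(i < length e1 \<and> fst (intervals 0 e1 ! i) \<le> t
            \<and> t \<le> fst (intervals 0 e1 ! i) + tau powi snd (intervals 0 e1 ! i))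
      = (i < length e1 \<and> t \<in> piece e1 i)" for i
    by (auto simp: nth_intervals piece_def offset_Suc tau_pow_def)
  show ?thesis
  proof (cases "\<exists>i < length e1. t \<in> piece e1 i")
    case True
    define j where "j = (LEAST i. i < length e1 \<and> t \<in> piece e1 i)"
    have "j < length e1" using LeastI_ex[of "\<lambda>i. i < length e1 \<and> t \<in> piece e1 i"] True
      unfolding j_def by blast
    then show ?thesis
      using True len
      by (simp add: pl_map_def Let_def in_piece nth_intervals tau_pow_def flip: j_def)
  qed (auto simp: pl_map_def Let_def in_piece)
qed

lemma tree_elem_eq_pl_map:
  "nleaves T2 = nleaves T1 \<Longrightarrow> tree_elem T1 T2 = pl_map (leaf_exps T1 0) (leaf_exps T2 0)"
  by (simp add: fun_eq_iff tree_elem_def leaves_eq_intervals pl_map_via_intervals)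

lemma leaf_exps_replace_leaf:
  "i < nleaves T \<Longrightarrow> leaf_exps (replace_leaf T i S) k
     = take i (leaf_exps T k) @ leaf_exps S (leaf_exps T k ! i) @ drop (Suc i) (leaf_exps T k)"
  by (induction T arbitrary: i k) (auto simp: nth_append Suc_diff_le)

lemma nleaves_spine [simp]: "nleaves (spine m) = Suc m"
  by (induction m) simp_all

definition spine_exps :: "nat \<Rightarrow> int list" where
  "spine_exps m = leaf_exps (spine m) 0"

lemma leaf_exps_spine: "leaf_exps (spine m) k = map (\<lambda>i. k + int i + 2) [0..<m] @ [k + int m]"
proof (induction m arbitrary: k)
  case (Suc m)
  have "[0..<Suc m] = 0 # map Suc [0..<m]" by (simp add: map_Suc_upt upt_conv_Cons)
  then show ?case using Suc by (simp add: algebra_simps)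
qed simp

lemma spine_exps_eq: "spine_exps m = map (\<lambda>i. int i + 2) [0..<m] @ [int m]"
  by (simp add: spine_exps_def leaf_exps_spine)

lemma length_spine_exps [simp]: "length (spine_exps m) = Suc m"
  by (simp add: spine_exps_eq)

lemma width_spine_exps [simp]: "width (spine_exps m) = 1"
  by (simp add: spine_exps_def)

lemma spine_exps_Suc: "spine_exps (Suc m) = split_at True m (spine_exps m)"
  by (simp add: spine_exps_eq split_at_append_Cons caret_exps_def algebra_simps)

lemma gen_eq_pl_map:
  "gen (c, n) = pl_map (split_at c n (spine_exps (Suc n))) (spine_exps (Suc (Suc n)))"
proof -
  define T where "T = replace_leaf (spine (Suc n)) n (if c then XC Leaf Leaf else YC Leaf Leaf)"
  have "gen (c, n) = tree_elem T (spine (Suc (Suc n)))"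
    by (cases c) (simp_all add: T_def gen_def xgen_def ygen_def del: spine.simps)
  moreover have T: "leaf_exps T 0 = split_at c n (spine_exps (Suc n))"
    using leaf_exps_replace_leaf[of n "spine (Suc n)"]
    by (simp add: T_def spine_exps_def split_at_def caret_exps_def del: spine.simps)
  moreover have "nleaves (spine (Suc (Suc n))) = nleaves T"
    using arg_cong[OF T, of length] by simp
  ultimately show ?thesis by (simp add: tree_elem_eq_pl_map spine_exps_def del: spine.simps)
qed

lemma gen_eq_pl_map_level:
  "n < m \<Longrightarrow> gen (c, n) = pl_map (split_at c n (spine_exps m)) (spine_exps (Suc m))"
proof (induction m)
  case (Suc m)
  show ?case
  proof (cases "n = m")
    case False
    then have "n < m" using Suc.prems by simp
    then have "split_at c n (spine_exps (Suc m))
        = split_at True (Suc m) (split_at c n (spine_exps m))"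
      by (simp add: spine_exps_Suc split_at_commute)
    then have "pl_map (split_at c n (spine_exps (Suc m))) (spine_exps (Suc (Suc m)))
        = pl_map (split_at c n (spine_exps m)) (spine_exps (Suc m))"
      using \<open>n < m\<close> by (simp add: spine_exps_Suc[of "Suc m"] pl_map_split_at)
    then show ?thesis using Suc.IH \<open>n < m\<close> by simp
  qed (simp add: gen_eq_pl_map)
qed simp

lemma bij_gen: "bij (gen a)"
  by (cases a) (simp add: gen_eq_pl_map bij_pl_map)

lemma inv_gen_eq_pl_map:
  "inv (gen (c, n)) = pl_map (spine_exps (Suc (Suc n))) (split_at c n (spine_exps (Suc n)))"
  by (simp add: gen_eq_pl_map inv_pl_map)

lemma gen_comp_gen_eq_pl_map:
  assumes "n < m" "k \<le> m"
  shows "gen (c', k) \<circ> gen (c, n)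
    = pl_map (split_at c' k (split_at c n (spine_exps m))) (spine_exps (Suc (Suc m)))"
proof -
  have "gen (c, n)
      = pl_map (split_at c' k (split_at c n (spine_exps m))) (split_at c' k (spine_exps (Suc m)))"
    using assms by (simp add: gen_eq_pl_map_level[of n m] pl_map_split_at)
  moreover have
    "gen (c', k) = pl_map (split_at c' k (spine_exps (Suc m))) (spine_exps (Suc (Suc m)))"
    using assms by (simp add: gen_eq_pl_map_level)
  ultimately show ?thesis using assms by (simp add: pl_map_comp)
qed

lemma gen_commute: "k < n \<Longrightarrow> gen (t, k) \<circ> gen (s, n) = gen (s, Suc n) \<circ> gen (t, k)"
  by (simp add: gen_comp_gen_eq_pl_map[of _ "Suc n"] split_at_commute)

lemma gen_y_twice: "gen (False, k) \<circ> gen (False, k) = gen (True, Suc k) \<circ> gen (True, k)"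
  by (simp add: gen_comp_gen_eq_pl_map[of _ "Suc k"] split_at_y_twice)

section \<open>The group generated by the x_n and y_n\<close>

inductive_set gen_group :: "(real \<Rightarrow> real) set" where
  id_in_gen_group: "id \<in> gen_group"
| gen_comp_in_gen_group: "g \<in> gen_group \<Longrightarrow> gen a \<circ> g \<in> gen_group"
| inv_gen_comp_in_gen_group: "g \<in> gen_group \<Longrightarrow> inv (gen a) \<circ> g \<in> gen_group"

lemma bij_of_gen_group: "g \<in> gen_group \<Longrightarrow> bij g"
  by (induction rule: gen_group.induct) (blast intro: bij_id bij_comp bij_gen bij_imp_bij_inv)+

lemma gen_group_comp: "h \<in> gen_group \<Longrightarrow> g \<in> gen_group \<Longrightarrow> h \<circ> g \<in> gen_group"
  by (induction rule: gen_group.induct) (auto simp: comp_assoc intro: gen_group.intros)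

lemma gen_in_gen_group: "gen a \<in> gen_group"
  using gen_comp_in_gen_group[OF id_in_gen_group] by simp

lemma inv_gen_in_gen_group: "inv (gen a) \<in> gen_group"
  using inv_gen_comp_in_gen_group[OF id_in_gen_group] by simp

lemma gen_group_inv: "g \<in> gen_group \<Longrightarrow> inv g \<in> gen_group"
proof (induction rule: gen_group.induct)
  case (gen_comp_in_gen_group g a)
  have "inv (gen a \<circ> g) = inv g \<circ> inv (gen a)"
    using bij_gen bij_of_gen_group[OF gen_comp_in_gen_group.hyps] by (rule o_inv_distrib)
  then show ?case using gen_group_comp[OF gen_comp_in_gen_group.IH inv_gen_in_gen_group] by metis
next
  case (inv_gen_comp_in_gen_group g a)
  have "inv (inv (gen a) \<circ> g) = inv g \<circ> gen a"
    using bij_imp_bij_inv[OF bij_gen] bij_of_gen_group[OF inv_gen_comp_in_gen_group.hyps]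
    by (simp add: o_inv_distrib inv_inv_eq[OF bij_gen])
  then show ?case using gen_group_comp[OF inv_gen_comp_in_gen_group.IH gen_in_gen_group] by metis
qed (metis id_in_gen_group inv_id)

lemma gen_group_comp_iff: "h \<in> gen_group \<Longrightarrow> h \<circ> g \<in> gen_group \<longleftrightarrow> g \<in> gen_group"
proof
  assume "h \<in> gen_group" "h \<circ> g \<in> gen_group"
  then have "inv h \<circ> (h \<circ> g) \<in> gen_group" by (simp add: gen_group_comp gen_group_inv)
  then show "g \<in> gen_group"
    using bij_of_gen_group[OF \<open>h \<in> gen_group\<close>] by (simp add: comp_assoc[symmetric] bij_is_inj)
qed (rule gen_group_comp)

lemma split_spine_in_gen_group:
  assumes "j \<le> m"
  shows "pl_map (split_at c j (spine_exps m)) (spine_exps (Suc m)) \<in> gen_group"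
proof (cases "j < m")
  case True
  then show ?thesis by (simp add: gen_eq_pl_map_level[symmetric] gen_in_gen_group)
next
  case False
  then have j: "j = m" using assms by simp
  show ?thesis
  proof (cases c)
    case True
    then show ?thesis by (simp add: j spine_exps_Suc[symmetric] pl_map_self id_in_gen_group)
  next
    case False
    \<comment> \<open>splitting the last piece on both sides by a y-caret turns the map into \<open>y\<^sub>m\<^sup>-\<^sup>1\<close>\<close>
    have "pl_map (split_at False m (spine_exps m)) (spine_exps (Suc m))
        = pl_map (spine_exps (Suc (Suc m))) (split_at False m (spine_exps (Suc m)))"
      using pl_map_split_at[of m "split_at False m (spine_exps m)" "spine_exps (Suc m)" False]
      by (simp add: split_at_y_twice spine_exps_Suc)
    then show ?thesis using j False inv_gen_in_gen_group[of "(False, m)"]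
      by (simp add: inv_gen_eq_pl_map)
  qed
qed

section \<open>Splitting pieces\<close>

inductive split_step :: "int list \<Rightarrow> int list \<Rightarrow> bool" where
  "split_step (u @ k # w) (u @ caret_exps c k @ w)"

abbreviation split_equiv :: "int list \<Rightarrow> int list \<Rightarrow> bool" where
  "split_equiv \<equiv> equivclp split_step"

lemma split_step_width: "split_step e e' \<Longrightarrow> width e' = width e"
  by (induction rule: split_step.induct) simp

lemma split_equiv_width: "split_equiv e e' \<Longrightarrow> width e' = width e"
  by (induction rule: equivclp_induct) (auto dest: split_step_width)

lemma split_step_append: "split_step e e' \<Longrightarrow> split_step (u @ e @ w) (u @ e' @ w)"
proof (induction rule: split_step.induct)
  case (1 v k v' c)
  show ?case using split_step.intros[of "u @ v" k "v' @ w" c] by simp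
qed

lemma split_equiv_append:
  assumes "split_equiv e1 e1'" "split_equiv e2 e2'"
  shows "split_equiv (e1 @ e2) (e1' @ e2')"
proof -
  have in_context: "split_equiv (u @ e @ w) (u @ e' @ w)" if "split_equiv e e'" for u e e' w
    using that
    by (induction rule: equivclp_induct) (auto intro: equivclp_into_equivclp split_step_append)
  have "split_equiv (e1 @ e2) (e1' @ e2)" using in_context[OF assms(1), of "[]" e2] by simp
  also have "split_equiv \<dots> (e1' @ e2')" using in_context[OF assms(2), of e1' "[]"] by simp
  finally show ?thesis .
qed

lemma split_equiv_caret: "split_equiv [k] (caret_exps c k)"
  using split_step.intros[of "[]" k "[]" c] by auto

lemma split_equiv_two_levels:
  fixes N :: int
  assumes "k \<le> N"
  shows "\<exists>D. set D \<subseteq> {N, N + 1} \<and> split_equiv [k] D"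
  using assms
proof (induction "nat (N - k)" arbitrary: k rule: less_induct)
  case less
  show ?case
  proof (cases "k = N")
    case False
    then have "\<exists>D. set D \<subseteq> {N, N + 1} \<and> split_equiv [k + 1] D"
      using less.hyps[of "k + 1"] less.prems by simp
    then obtain D1 where D1: "set D1 \<subseteq> {N, N + 1}" "split_equiv [k + 1] D1"
      by blast
    obtain D2 where D2: "set D2 \<subseteq> {N, N + 1}" "split_equiv [k + 2] D2"
    proof (cases "k + 2 \<le> N")
      case True
      then show ?thesis using less.hyps[of "k + 2"] that by fastforce
    next
      case False
      then show ?thesis using \<open>k \<noteq> N\<close> less.prems that[of "[k + 2]"] by auto
    qed
    have "split_equiv [k] ([k + 1] @ [k + 2])"
      using split_equiv_caret[of k False] by (simp add: caret_exps_def)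
    also have "split_equiv \<dots> (D1 @ D2)"
      using D1 D2 by (intro split_equiv_append)
    finally show ?thesis using D1 D2 by (intro exI[of _ "D1 @ D2"]) auto
  qed (auto intro: exI[of _ "[N]"])
qed

lemma split_equiv_two_levels_list:
  fixes N :: int
  shows "\<forall>k \<in> set e. k \<le> N \<Longrightarrow> \<exists>D. set D \<subseteq> {N, N + 1} \<and> split_equiv e D"
proof (induction e)
  case (Cons k e)
  obtain D1 D2 where "set D1 \<subseteq> {N, N + 1}" "split_equiv [k] D1"
    "set D2 \<subseteq> {N, N + 1}" "split_equiv e D2"
    using Cons split_equiv_two_levels[of k N] by auto
  then show ?case
    using split_equiv_append[of "[k]" D1 e D2] by (intro exI[of _ "D1 @ D2"]) auto
qed (auto intro: exI[of _ "[]"])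

lemma split_equiv_swap: "split_equiv [N + 1, N] [N, N + 1]"
proof -
  have "split_equiv [N + 1, N] [N - 1]"
    using split_equiv_caret[of "N - 1" True] by (simp add: caret_exps_def equivclp_sym add.commute)
  also have "split_equiv [N - 1] [N, N + 1]"
    using split_equiv_caret[of "N - 1" False] by (simp add: caret_exps_def add.commute)
  finally show ?thesis .
qed

lemma split_equiv_move_right: "split_equiv ([N + 1] @ replicate A N) (replicate A N @ [N + 1])"
proof (induction A)
  case (Suc A)
  have "split_equiv ([N + 1] @ replicate (Suc A) N) ([N, N + 1] @ replicate A N)"
    using split_equiv_append[OF split_equiv_swap equivclp_refl] by simp
  also have "split_equiv \<dots> ([N] @ replicate A N @ [N + 1])"
    using split_equiv_append[OF equivclp_refl Suc.IH, of "[N]"] by simp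
  finally show ?case by (simp add: replicate_app_Cons_same)
qed simp

lemma split_equiv_sorted_two_levels:
  fixes N :: int
  assumes "set D \<subseteq> {N, N + 1}"
  shows "\<exists>A B. split_equiv D (replicate A N @ replicate B (N + 1))"
  using assms
proof (induction D)
  case Nil
  show ?case using equivclp_refl by (metis append_Nil replicate_0)
next
  case (Cons k D)
  then obtain A B where AB: "split_equiv D (replicate A N @ replicate B (N + 1))"
    by auto
  have k: "split_equiv (k # D) (k # replicate A N @ replicate B (N + 1))"
    using split_equiv_append[OF equivclp_refl[of _ "[k]"] AB] by simp
  from Cons.prems have "k = N \<or> k = N + 1" by auto
  then show ?case
  proof
    assume "k = N"
    then show ?case using k by (intro exI[of _ "Suc A"] exI[of _ B]) simp
  next
    assume "k = N + 1"
    moreover have "split_equiv ((N + 1) # replicate A N @ replicate B (N + 1))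
        (replicate A N @ replicate (Suc B) (N + 1))"
      using split_equiv_append[OF split_equiv_move_right equivclp_refl[of _ "replicate B (N + 1)"]]
      by simp
    ultimately show ?case using k by (blast intro: equivclp_trans)
  qed
qed

lemma two_level_width_inj:
  fixes A B A' B' :: nat
  assumes "real A * tau_pow N + real B * tau_pow (N + 1)
    = real A' * tau_pow N + real B' * tau_pow (N + 1)"
  shows "A = A' \<and> B = B'"
proof -
  have "tau_pow N * (real A + real B * tau) = tau_pow N * (real A' + real B' * tau)"
    using assms by (simp add: tau_pow_add algebra_simps)
  then have eq: "real A + real B * tau = real A' + real B' * tau" using tau_pow_pos[of N] by simp
  then have "real_of_int (int A - int A') = tau * real_of_int (int B' - int B)"
    by (simp add: algebra_simps)
  then have "B = B'" using tau_times_int_eq_int_imp_zero by fastforce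
  then show ?thesis using eq by simp
qed

lemma split_equiv_single_piece:
  assumes "width e = 1"
  shows "split_equiv e [0]"
proof -
  define N where "N = Max (insert 0 (set e))"
  obtain D D0 where D: "set D \<subseteq> {N, N + 1}" "split_equiv e D"
    and D0: "set D0 \<subseteq> {N, N + 1}" "split_equiv [0] D0"
    using split_equiv_two_levels_list[of e N] split_equiv_two_levels_list[of "[0]" N]
    by (auto simp: N_def)
  obtain A B A' B' where AB: "split_equiv D (replicate A N @ replicate B (N + 1))"
    and AB': "split_equiv D0 (replicate A' N @ replicate B' (N + 1))"
    using split_equiv_sorted_two_levels D(1) D0(1) by meson
  have "width (replicate A N @ replicate B (N + 1)) = width (replicate A' N @ replicate B' (N + 1))"
    using split_equiv_width[OF equivclp_trans[OF D(2) AB]]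
      split_equiv_width[OF equivclp_trans[OF D0(2) AB']] assms by simp
  then have "A = A' \<and> B = B'" by (intro two_level_width_inj) simp
  then show ?thesis
    using D(2) AB AB' D0(2) by (blast intro: equivclp_trans equivclp_sym)
qed

definition to_spine :: "int list \<Rightarrow> real \<Rightarrow> real" where
  "to_spine e = pl_map e (spine_exps (length e - 1))"

lemma to_spine_split_step:
  assumes "split_step e e'" "width e = 1"
  obtains g where "g \<in> gen_group" "to_spine e' = g \<circ> to_spine e"
  using assms
proof (induction rule: split_step.induct)
  case (1 u k w c)
  define m where "m = length u + length w"
  have "length u < length (spine_exps m)" by (simp add: m_def)
  then obtain u' k' w' where s: "spine_exps m = u' @ k' # w'" "length u' = length u"
      "split_at c (length u) (spine_exps m) = u' @ caret_exps c k' @ w'"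
    using split_at_eq_append_Cons by blast
  have lw: "length w' = length w" "width (u' @ k' # w') = 1"
    using arg_cong[OF s(1), of length] arg_cong[OF s(1), of width] s(2) by (simp_all add: m_def)
  define g where "g = pl_map (split_at c (length u) (spine_exps m)) (spine_exps (Suc m))"
  have "g \<in> gen_group" unfolding g_def by (rule split_spine_in_gen_group) (simp add: m_def)
  moreover have "to_spine (u @ caret_exps c k @ w)
      = g \<circ> pl_map (u @ caret_exps c k @ w) (u' @ caret_exps c k' @ w')"
    using 1 s lw
      pl_map_comp[of "u' @ caret_exps c k' @ w'" "u @ caret_exps c k @ w" "spine_exps (Suc m)"]
    unfolding g_def to_spine_def by (simp add: m_def)
  moreover have "pl_map (u @ caret_exps c k @ w) (u' @ caret_exps c k' @ w') = to_spine (u @ k # w)"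
    using 1 s lw pl_map_split_at[of "length u" "u @ k # w" "spine_exps m" c]
    by (simp add: to_spine_def split_at_append_Cons m_def)
  ultimately show ?case using 1 by metis
qed

lemma to_spine_in_gen_group_iff:
  assumes "split_equiv e e'" "width e = 1"
  shows "to_spine e' \<in> gen_group \<longleftrightarrow> to_spine e \<in> gen_group"
  using assms
proof (induction rule: equivclp_induct)
  case (step y z)
  have "width y = 1" "width z = 1"
    using step.hyps split_equiv_width[of e] step.prems by (auto dest: split_step_width)
  have "to_spine z \<in> gen_group \<longleftrightarrow> to_spine y \<in> gen_group"
    using step.hyps(2)
  proof
    assume "split_step y z"
    then obtain g where "g \<in> gen_group" "to_spine z = g \<circ> to_spine y"
      using to_spine_split_step \<open>width y = 1\<close> by blast
    then show ?thesis by (simp add: gen_group_comp_iff)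
  next
    assume "split_step z y"
    then obtain g where "g \<in> gen_group" "to_spine y = g \<circ> to_spine z"
      using to_spine_split_step \<open>width z = 1\<close> by blast
    then show ?thesis by (simp add: gen_group_comp_iff)
  qed
  then show ?case using step by simp
qed simp

lemma pl_map_in_gen_group:
  assumes "length e2 = length e1" "width e1 = 1" "width e2 = 1"
  shows "pl_map e1 e2 \<in> gen_group"
proof -
  have "to_spine [0] = id" by (simp add: to_spine_def spine_exps_eq pl_map_self)
  then have to_spine: "to_spine e \<in> gen_group" if "width e = 1" for e
    using to_spine_in_gen_group_iff[OF split_equiv_single_piece[OF that]] that id_in_gen_group
    by simp
  have "length (spine_exps (length e1 - 1)) = length e1" using assms by (cases e1) auto
  then have "pl_map e1 e2 = inv (to_spine e2) \<circ> to_spine e1"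
    using assms by (simp add: to_spine_def inv_pl_map pl_map_comp)
  then show ?thesis using gen_group_comp[OF gen_group_inv] to_spine assms by simp
qed

section \<open>Elements of F_tau are subdivision maps\<close>

text \<open>If \<open>m + n tau > 0\<close> has coefficients of mixed sign, then either it is a sum of copies of
  \<open>1\<close> and \<open>tau\<^sup>2 = 1 - tau\<close>, or dividing it by \<open>tau\<close>, i.e. multiplying by \<open>1 + tau\<close>,
  decreases \<open>\<bar>n\<bar>\<close>.\<close>

lemma width_times_one_plus_tau:
  assumes "width e = x * (1 + tau)"
  shows "width (map ((+) 1) e) = x"
proof -
  have "width (map ((+) 1) e) = x * (tau * tau + tau)" using assms by (simp add: width_shift algebra_simps)
  then show ?thesis by (simp add: tau_squared_add_tau)
qed

lemma exists_width_eq: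
  "0 < real_of_int m + real_of_int n * tau \<Longrightarrow> \<exists>e. width e = real_of_int m + real_of_int n * tau"
proof (induction "nat \<bar>n\<bar>" arbitrary: m n rule: less_induct)
  case less
  let ?x = "real_of_int m + real_of_int n * tau"
  have descend: "\<exists>e. width e = ?x" if lt: "\<bar>m\<bar> < \<bar>n\<bar>"
  proof -
    have "?x * (1 + tau) = real_of_int m + real_of_int m * tau + real_of_int n * (tau * tau + tau)"
      by (simp add: algebra_simps)
    then have "real_of_int (m + n) + real_of_int m * tau = ?x * (1 + tau)"
      using tau_squared_add_tau by simp
    moreover have "0 < ?x * (1 + tau)" "nat \<bar>m\<bar> < nat \<bar>n\<bar>" using less.prems tau_pos lt by simp_all
    ultimately show ?thesis using less.hyps[of m "m + n"] width_times_one_plus_tau by auto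
  qed
  consider "0 \<le> m" "0 \<le> n" | "m < 0" "0 \<le> n" | "0 \<le> m + n" "n < 0" | "m + n < 0" "n < 0"
    by linarith
  then show ?case
  proof cases
    case 1
    then have "width (replicate (nat m) 0 @ replicate (nat n) 1) = ?x" by simp
    then show ?thesis by blast
  next
    case 2
    have "real_of_int (- m) < real_of_int n * tau" using less.prems by simp
    also have "\<dots> \<le> real_of_int n" using 2 tau_less_1 by (simp add: mult_left_le)
    finally show ?thesis using 2 descend by simp
  next
    case 3
    have t2: "tau_pow 2 = 1 - tau" using tau_squared_add_tau
      by (simp add: tau_pow_def power2_eq_square)
    have "width (replicate (nat (m + n)) 0 @ replicate (nat (- n)) 2) = ?x"
      using 3 by (simp add: t2 algebra_simps)
    then show ?thesis by blast
  next
    case 4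
    have "real_of_int n * tau < 0" using 4 tau_pos by (simp add: mult_neg_pos)
    then have "0 < real_of_int m" using less.prems by linarith
    then show ?thesis using 4 descend by simp
  qed
qed

lemma Ztau_diff: "a \<in> Ztau \<Longrightarrow> b \<in> Ztau \<Longrightarrow> b - a \<in> Ztau"
proof -
  assume "a \<in> Ztau" "b \<in> Ztau"
  then obtain i j k l where "a = of_int i + of_int j * tau" "b = of_int k + of_int l * tau"
    unfolding Ztau_def by blast
  then have "b - a = of_int (k - i) + of_int (l - j) * tau" by (simp add: algebra_simps)
  then show ?thesis unfolding Ztau_def by blast
qed

lemma Ztau_pos_eq_width: "x \<in> Ztau \<Longrightarrow> 0 < x \<Longrightarrow> \<exists>e. width e = x"
  unfolding Ztau_def using exists_width_eq by auto

lemma mono_on_image_interval_endpoints: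
  fixes f :: "'a :: linorder \<Rightarrow> 'b :: linorder"
  assumes mono: "mono_on {a..b} f" and image: "f ` {a..b} = {c..d}" and "a \<le> b"
  shows "f a = c" "f b = d"
proof -
  have fab: "f a \<in> {c..d}" "f b \<in> {c..d}" using image \<open>a \<le> b\<close> by auto
  then have "c \<in> f ` {a..b}" "d \<in> f ` {a..b}" using image by auto
  then obtain s s' where "s \<in> {a..b}" "f s = c" "s' \<in> {a..b}" "f s' = d" by force
  then have "f a \<le> c" "d \<le> f b" using mono_onD[OF mono] \<open>a \<le> b\<close> by auto
  then show "f a = c" "f b = d" using fab by auto
qed

definition maps_subdiv :: "(real \<Rightarrow> real) \<Rightarrow> real \<Rightarrow> int list \<Rightarrow> int list \<Rightarrow> bool" where
  "maps_subdiv f p e1 e2 \<longleftrightarrow> length e2 = length e1 \<and> f (p + width e1) = f p + width e2 \<and>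
     (\<forall>i < length e1. \<forall>t \<in> piece e1 i.
        f (p + t) = f p + offset e2 i + tau_pow (e2 ! i - e1 ! i) * (t - offset e1 i))"

lemma maps_subdiv_affine:
  assumes "\<forall>t \<in> {p .. p + width e}. f t = tau_pow k * t + c"
  shows "maps_subdiv f p e (map ((+) k) e)"
proof -
  have f: "f (p + t) = f p + tau_pow k * t" if "t \<in> {0 .. width e}" for t
    using assms that width_nonneg[of e] by (simp add: algebra_simps)
  show ?thesis
    unfolding maps_subdiv_def
  proof (intro conjI allI impI ballI)
    fix i t assume "i < length e" "t \<in> piece e i"
    then have "f (p + t) = f p + tau_pow k * t" using f piece_subset[of e i] by blast
    then show "f (p + t) = f p + offset (map ((+) k) e) i
        + tau_pow (map ((+) k) e ! i - e ! i) * (t - offset e i)"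
      using \<open>i < length e\<close> by (simp add: offset_shift algebra_simps)
  qed (use f[of "width e"] width_nonneg[of e] in \<open>simp_all add: width_shift\<close>)
qed

lemma maps_subdiv_append:
  assumes u: "maps_subdiv f p u1 u2" and w: "maps_subdiv f (p + width u1) w1 w2"
  shows "maps_subdiv f p (u1 @ w1) (u2 @ w2)"
  unfolding maps_subdiv_def
proof (intro conjI allI impI ballI)
  show "length (u2 @ w2) = length (u1 @ w1)" "f (p + width (u1 @ w1)) = f p + width (u2 @ w2)"
    using u w by (simp_all add: maps_subdiv_def add.assoc)
  fix i t assume i: "i < length (u1 @ w1)" and t: "t \<in> piece (u1 @ w1) i"
  show "f (p + t) = f p + offset (u2 @ w2) i
          + tau_pow ((u2 @ w2) ! i - (u1 @ w1) ! i) * (t - offset (u1 @ w1) i)"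
  proof (cases "i < length u1")
    case True
    then show ?thesis using u t by (simp add: maps_subdiv_def piece_def nth_append)
  next
    case False
    define j where "j = i - length u1"
    have ij: "i = length u1 + j" "j < length w1" using False i by (simp_all add: j_def)
    have lu: "length u2 = length u1" using u by (simp add: maps_subdiv_def)
    have "t - width u1 \<in> piece w1 j"
      using t ij(1) offset_append_right[of u1 w1 "Suc j"] by (simp add: piece_def)
    then have "f (p + width u1 + (t - width u1))
        = f (p + width u1) + offset w2 j + tau_pow (w2 ! j - w1 ! j) * (t - width u1 - offset w1 j)"
      using w ij(2) unfolding maps_subdiv_def by blast
    moreover have "f (p + width u1) = f p + width u2" using u by (simp add: maps_subdiv_def)
    ultimately show ?thesis
      using ij lu offset_append_right[of u2 w2 j] offset_append_right[of u1 w1 j]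
      by (simp add: nth_append algebra_simps)
  qed
qed

lemma maps_subdiv_breakpoints:
  assumes "sorted_wrt (<) (p # ps)" "set (p # ps) \<subseteq> Ztau"
    and "\<forall>i < length ps. \<exists>(k::int) (c::real).
           \<forall>t \<in> {(p # ps) ! i .. (p # ps) ! Suc i}. f t = tau powi k * t + c"
  shows "\<exists>e1 e2. width e1 = last (p # ps) - p \<and> maps_subdiv f p e1 e2"
  using assms
proof (induction ps arbitrary: p)
  case Nil
  show ?case by (intro exI[of _ "[]"]) (simp add: maps_subdiv_def)
next
  case (Cons q ps)
  have "p < q" "q - p \<in> Ztau" using Cons.prems(1,2) by (auto intro: Ztau_diff)
  then obtain e where e: "width e = q - p" using Ztau_pos_eq_width by fastforce
  obtain k c where "\<forall>t \<in> {p .. q}. f t = tau_pow k * t + c"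
    using Cons.prems(3)[rule_format, of 0] by (auto simp: tau_pow_def)
  then have head: "maps_subdiv f p e (map ((+) k) e)" using e
    by (intro maps_subdiv_affine[where c = c]) simp
  have "\<forall>i < length ps. \<exists>(k::int) (c::real).
          \<forall>t \<in> {(q # ps) ! i .. (q # ps) ! Suc i}. f t = tau powi k * t + c"
    using Cons.prems(3) by (simp add: All_less_Suc2)
  moreover have "sorted_wrt (<) (q # ps)" "set (q # ps) \<subseteq> Ztau" using Cons.prems(1,2) by auto
  ultimately obtain e1 e2 where "width e1 = last (q # ps) - q" "maps_subdiv f q e1 e2"
    using Cons.IH by blast
  then show ?case
    using maps_subdiv_append[OF head, of e1 e2] e
    by (intro exI[of _ "e @ e1"] exI[of _ "map ((+) k) e @ e2"]) simp
qed

lemma F_tau_eq_pl_map: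
  assumes "f \<in> F_tau"
  obtains e1 e2 where "length e2 = length e1" "width e1 = 1" "width e2 = 1" "f = pl_map e1 e2"
proof -
  obtain ps where ps: "length ps \<ge> 2" "sorted_wrt (<) ps" "hd ps = 0" "last ps = 1" "set ps \<subseteq> Ztau"
      "\<forall>i < length ps - 1. \<exists>(k::int) (c::real).
         \<forall>t \<in> {ps ! i .. ps ! (i + 1)}. f t = tau powi k * t + c"
    using assms unfolding F_tau_def by blast
  have "mono_on {0..1} f" "f ` {0..1} = {0..1}" and outside: "\<forall>t. t \<notin> {0..1} \<longrightarrow> f t = t"
    using assms unfolding F_tau_def by (auto intro: strict_mono_on_imp_mono_on)
  then have f01: "f 0 = 0" "f 1 = 1" using mono_on_image_interval_endpoints[of 0 1 f 0 1]
    by simp_all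
  obtain ps' where "ps = 0 # ps'" using ps(1,3) by (cases ps) auto
  then obtain e1 e2 where "width e1 = 1" "maps_subdiv f 0 e1 e2"
    using maps_subdiv_breakpoints[of 0 ps' f] ps by auto
  moreover from this have "f = pl_map e1 e2"
    using outside f01 by (intro pl_map_eqI) (auto simp: maps_subdiv_def)
  ultimately show ?thesis using f01 by (intro that) (auto simp: maps_subdiv_def)
qed

section \<open>Normal forms\<close>

definition gen_word :: "(bool \<times> nat) list \<Rightarrow> real \<Rightarrow> real" where
  "gen_word as = gprod (map gen as)"

lemma gprod_append: "gprod (u @ v) = gprod v \<circ> gprod u"
  by (induction u) (simp_all add: comp_assoc)

lemma gen_word_Nil [simp]: "gen_word [] = id"
  by (simp add: gen_word_def)

lemma gen_word_Cons: "gen_word (a # as) = gen_word as \<circ> gen a"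
  by (simp add: gen_word_def)

lemma gen_word_snoc: "gen_word (as @ [a]) = gen a \<circ> gen_word as"
  by (simp add: gen_word_def gprod_append)

lemma bij_gen_word: "bij (gen_word as)"
  by (induction as) (simp_all only: gen_word_Nil gen_word_Cons bij_id bij_comp bij_gen)

lemma inv_gen_word_Cons: "inv (gen_word (b # bs)) = inv (gen b) \<circ> inv (gen_word bs)"
  by (simp add: gen_word_Cons o_inv_distrib bij_gen bij_gen_word)

lemma gprod_inv_gens: "gprod (rev (map (\<lambda>b. inv (gen b)) bs)) = inv (gen_word bs)"
  by (induction bs) (simp_all add: gprod_append inv_gen_word_Cons)

lemma comp_inv_eq_inv_comp:
  assumes "bij f" "bij k" "f \<circ> g = h \<circ> k"
  shows "g \<circ> inv k = inv f \<circ> h"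
proof -
  have fk: "inv f \<circ> f = id" "k \<circ> inv k = id"
    using assms(1,2) by (simp_all add: bij_is_inj bij_is_surj flip: surj_iff)
  have "g \<circ> inv k = (inv f \<circ> f) \<circ> g \<circ> inv k" by (simp add: fk)
  also have "\<dots> = inv f \<circ> h \<circ> (k \<circ> inv k)" by (simp only: assms(3) comp_assoc)
  also have "\<dots> = inv f \<circ> h" by (simp add: fk)
  finally show ?thesis .
qed

lemma gen_comp_inv_gen_exchange:
  assumes "a \<noteq> b"
  obtains c d where "gen a \<circ> inv (gen b) = inv (gen c) \<circ> gen d" "snd b \<le> snd c"
    "snd a < snd b \<Longrightarrow> d = a \<and> snd c = Suc (snd b)"
proof -
  obtain s k t n where ab: "a = (s, k)" "b = (t, n)" by (cases a, cases b) blast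
  consider "n < k" | "k < n" | "k = n" "s \<noteq> t" using assms ab by (cases "n < k"; cases "k < n") auto
  then show ?thesis
  proof cases
    case 1
    then have "gen a \<circ> inv (gen b) = inv (gen b) \<circ> gen (s, Suc k)"
      using ab gen_commute[of n k t s] by (intro comp_inv_eq_inv_comp[OF bij_gen bij_gen]) simp
    then show ?thesis using 1 ab by (intro that) auto
  next
    case 2
    then have "gen a \<circ> inv (gen b) = inv (gen (t, Suc n)) \<circ> gen a"
      using ab gen_commute[of k n s t] by (intro comp_inv_eq_inv_comp[OF bij_gen bij_gen]) simp
    then show ?thesis using 2 ab by (intro that) auto
  next
    case 3
    then consider "a = (True, k)" "b = (False, k)" | "a = (False, k)" "b = (True, k)"
      using ab by (cases s) auto
    then show ?thesis
    proof cases
      case 1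
      then have "gen a \<circ> inv (gen b) = inv (gen (True, Suc k)) \<circ> gen (False, k)"
        using gen_y_twice[of k] by (intro comp_inv_eq_inv_comp[OF bij_gen bij_gen]) simp
      then show ?thesis using 1 by (intro that) auto
    next
      case 2
      then have "gen a \<circ> inv (gen b) = inv (gen (False, k)) \<circ> gen (True, Suc k)"
        using gen_y_twice[of k] by (intro comp_inv_eq_inv_comp[OF bij_gen bij_gen]) simp
      then show ?thesis using 2 by (intro that) auto
    qed
  qed
qed

lemma sorted_gen_word_Cons:
  "sorted (map snd bs) \<Longrightarrow> \<exists>bs'. sorted (map snd bs') \<and> gen_word (a # bs) = gen_word bs' \<and>
     (\<forall>m. (\<forall>x \<in> set (a # bs). m \<le> snd x) \<longrightarrow> (\<forall>x \<in> set bs'. m \<le> snd x))"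
proof (induction bs arbitrary: a)
  case Nil
  show ?case by (intro exI[of _ "[a]"]) simp
next
  case (Cons b bs)
  show ?case
  proof (cases "snd a \<le> snd b")
    case True
    then show ?thesis using Cons.prems by (intro exI[of _ "a # b # bs"]) auto
  next
    case False
    define a' where "a' = (fst a, Suc (snd a))"
    obtain bs' where bs': "sorted (map snd bs')" "gen_word (a' # bs) = gen_word bs'"
        "\<forall>m. (\<forall>x \<in> set (a' # bs). m \<le> snd x) \<longrightarrow> (\<forall>x \<in> set bs'. m \<le> snd x)"
      using Cons.IH[of a'] Cons.prems by auto
    have swap: "gen b \<circ> gen a = gen a' \<circ> gen b"
      using gen_commute[of "snd b" "snd a" "fst b" "fst a"] False by (simp add: a'_def)
    have "gen_word (a # b # bs) = gen_word bs \<circ> (gen b \<circ> gen a)"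
      by (simp only: gen_word_Cons comp_assoc)
    also have "\<dots> = gen_word bs' \<circ> gen b" by (simp only: swap gen_word_Cons comp_assoc flip: bs'(2))
    also have "\<dots> = gen_word (b # bs')" by (simp only: gen_word_Cons)
    finally have "gen_word (a # b # bs) = gen_word (b # bs')" .
    moreover have "\<forall>x \<in> set bs'. snd b \<le> snd x" using bs'(3) Cons.prems False by (auto simp: a'_def)
    ultimately show ?thesis using bs' by (intro exI[of _ "b # bs'"]) (auto simp: a'_def)
  qed
qed

lemma sorted_gen_word_snoc:
  "sorted (map snd as) \<Longrightarrow> \<exists>as'. sorted (map snd as') \<and> gen a \<circ> gen_word as = gen_word as' \<and>
     (\<forall>M. (\<forall>x \<in> set (a # as). snd x \<le> M) \<longrightarrow> (\<forall>x \<in> set as'. snd x \<le> Suc M))"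
proof (induction as arbitrary: a rule: rev_induct)
  case Nil
  show ?case by (intro exI[of _ "[a]"]) (simp add: gen_word_Cons)
next
  case (snoc z as)
  have sorted: "sorted (map snd as)" "\<forall>x \<in> set as. snd x \<le> snd z" using snoc.prems
    by (auto simp: sorted_append)
  show ?case
  proof (cases "snd z \<le> snd a")
    case True
    have "gen a \<circ> gen_word (as @ [z]) = gen_word ((as @ [z]) @ [a])" by (simp only: gen_word_snoc)
    moreover have "sorted (map snd ((as @ [z]) @ [a]))"
      using snoc.prems True sorted(2) by (auto simp: sorted_append)
    ultimately show ?thesis by (intro exI[of _ "(as @ [z]) @ [a]"]) auto
  next
    case False
    define z' where "z' = (fst z, Suc (snd z))"
    obtain as' where as': "sorted (map snd as')" "gen a \<circ> gen_word as = gen_word as'"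
        "\<forall>M. (\<forall>x \<in> set (a # as). snd x \<le> M) \<longrightarrow> (\<forall>x \<in> set as'. snd x \<le> Suc M)"
      using snoc.IH sorted by blast
    have swap: "gen a \<circ> gen z = gen z' \<circ> gen a"
      using gen_commute[of "snd a" "snd z" "fst a" "fst z"] False by (simp add: z'_def)
    have "gen a \<circ> gen_word (as @ [z]) = gen z' \<circ> (gen a \<circ> gen_word as)"
      by (simp only: gen_word_snoc swap comp_assoc[symmetric])
    then have "gen a \<circ> gen_word (as @ [z]) = gen_word (as' @ [z'])"
      by (simp only: as'(2) gen_word_snoc)
    moreover have "\<forall>x \<in> set as'. snd x \<le> snd z'" using as'(3) sorted False by (auto simp: z'_def)
    ultimately show ?thesis using as'
      by (intro exI[of _ "as' @ [z']"]) (auto simp: sorted_append z'_def)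
  qed
qed

definition in_normal_form :: "(real \<Rightarrow> real) \<Rightarrow> bool" where
  "in_normal_form g \<longleftrightarrow>
     (\<exists>as bs. sorted (map snd as) \<and> sorted (map snd bs) \<and> g = inv (gen_word bs) \<circ> gen_word as)"

text \<open>Pushing a generator through a sorted negative word: the bounds on the indices of the
  negative part are what keeps it sorted in the induction.\<close>

lemma gen_comp_normal_form:
  assumes "sorted (map snd as)" "sorted (map snd bs)"
  obtains as' bs' where "sorted (map snd as')" "sorted (map snd bs')"
    "gen a \<circ> (inv (gen_word bs) \<circ> gen_word as) = inv (gen_word bs') \<circ> gen_word as'"
    "\<And>m. \<forall>x \<in> set bs. m \<le> snd x \<Longrightarrow> \<forall>x \<in> set bs'. m \<le> snd x"
    "\<And>m. snd a < m \<Longrightarrow> \<forall>x \<in> set bs. m \<le> snd x \<Longrightarrow> \<forall>x \<in> set bs'. Suc m \<le> snd x"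
  using assms(2)
proof (induction bs arbitrary: a thesis)
  case Nil
  obtain as' where "sorted (map snd as')" "gen a \<circ> gen_word as = gen_word as'"
    using sorted_gen_word_snoc[OF assms(1)] by blast
  then show ?case using Nil.prems(1)[of as' "[]"] by simp
next
  case (Cons b bs)
  have bs: "sorted (map snd bs)" "\<forall>x \<in> set bs. snd b \<le> snd x" using Cons.prems(2) by auto
  have split: "gen a \<circ> (inv (gen_word (b # bs)) \<circ> gen_word as)
      = (gen a \<circ> inv (gen b)) \<circ> (inv (gen_word bs) \<circ> gen_word as)"
    by (simp only: inv_gen_word_Cons comp_assoc)
  show ?case
  proof (cases "a = b")
    case True
    then have "gen a \<circ> inv (gen b) = id" using bij_is_surj[OF bij_gen] by (simp flip: surj_iff)
    then have "gen a \<circ> (inv (gen_word (b # bs)) \<circ> gen_word as) = inv (gen_word bs) \<circ> gen_word as"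
      by (simp only: split id_comp)
    then show ?thesis by (rule Cons.prems(1)[OF assms(1) bs(1)]) (use True in auto)
  next
    case False
    then obtain c d where cd: "gen a \<circ> inv (gen b) = inv (gen c) \<circ> gen d" "snd b \<le> snd c"
      "snd a < snd b \<Longrightarrow> d = a \<and> snd c = Suc (snd b)"
      using gen_comp_inv_gen_exchange by blast
    obtain as' bs' where IH: "sorted (map snd as')" "sorted (map snd bs')"
        "gen d \<circ> (inv (gen_word bs) \<circ> gen_word as) = inv (gen_word bs') \<circ> gen_word as'"
        "\<And>m. \<forall>x \<in> set bs. m \<le> snd x \<Longrightarrow> \<forall>x \<in> set bs'. m \<le> snd x"
        "\<And>m. snd d < m \<Longrightarrow> \<forall>x \<in> set bs. m \<le> snd x \<Longrightarrow> \<forall>x \<in> set bs'. Suc m \<le> snd x"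
      by (rule Cons.IH[of d, OF _ bs(1)]) iprover
    obtain bs'' where bs'': "sorted (map snd bs'')" "gen_word (c # bs') = gen_word bs''"
        "\<forall>m. (\<forall>x \<in> set (c # bs'). m \<le> snd x) \<longrightarrow> (\<forall>x \<in> set bs''. m \<le> snd x)"
      using sorted_gen_word_Cons[OF IH(2)] by blast
    have "gen a \<circ> (inv (gen_word (b # bs)) \<circ> gen_word as)
        = inv (gen c) \<circ> (gen d \<circ> (inv (gen_word bs) \<circ> gen_word as))"
      by (simp only: split cd(1) comp_assoc)
    also have "\<dots> = inv (gen_word bs'') \<circ> gen_word as'"
      by (simp only: IH(3) comp_assoc inv_gen_word_Cons flip: bs''(2))
    finally show ?thesis
    proof (rule Cons.prems(1)[OF IH(1) bs''(1)])
      fix m assume m: "\<forall>x \<in> set (b # bs). m \<le> snd x"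
      then have "\<forall>x \<in> set (c # bs'). m \<le> snd x" using cd(2) IH(4)[of m] by auto
      then show "\<forall>x \<in> set bs''. m \<le> snd x" using bs''(3) by blast
    next
      fix m assume "snd a < m" and m: "\<forall>x \<in> set (b # bs). m \<le> snd x"
      then have "d = a" "Suc m \<le> snd c" using cd(3) by auto
      then have "\<forall>x \<in> set (c # bs'). Suc m \<le> snd x" using IH(5)[of m] \<open>snd a < m\<close> m by auto
      then show "\<forall>x \<in> set bs''. Suc m \<le> snd x" using bs''(3) by blast
    qed
  qed
qed

lemma gen_group_normal_form: "g \<in> gen_group \<Longrightarrow> in_normal_form g"
proof (induction rule: gen_group.induct)
  case id_in_gen_group
  show ?case unfolding in_normal_form_def by (intro exI[of _ "[]"]) simp
next
  case (gen_comp_in_gen_group g a)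
  then obtain as bs where sorted: "sorted (map snd as)" "sorted (map snd bs)"
    and g: "g = inv (gen_word bs) \<circ> gen_word as"
    unfolding in_normal_form_def by blast
  show ?case
  proof (rule gen_comp_normal_form[OF sorted, of a])
    fix as' bs' assume "sorted (map snd as')" "sorted (map snd bs')"
      "gen a \<circ> (inv (gen_word bs) \<circ> gen_word as) = inv (gen_word bs') \<circ> gen_word as'"
    then show ?thesis unfolding in_normal_form_def g by blast
  qed
next
  case (inv_gen_comp_in_gen_group g a)
  then obtain as bs where "sorted (map snd as)" "sorted (map snd bs)"
    and "g = inv (gen_word bs) \<circ> gen_word as"
    unfolding in_normal_form_def by blast
  moreover obtain bs' where "sorted (map snd bs')" "gen_word (a # bs) = gen_word bs'"
    using sorted_gen_word_Cons[OF \<open>sorted (map snd bs)\<close>] by blast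
  ultimately have "inv (gen a) \<circ> g = inv (gen_word bs') \<circ> gen_word as"
    by (simp only: comp_assoc[symmetric] flip: inv_gen_word_Cons)
  then show ?case
    using \<open>sorted (map snd as)\<close> \<open>sorted (map snd bs')\<close> unfolding in_normal_form_def by blast
qed

theorem mainTheorem12:
  assumes "f \<in> F_tau"
  shows "\<exists>as bs :: (bool \<times> nat) list.
           sorted (map snd as) \<and> sorted (map snd bs) \<and>
           f = gprod (map gen as @ rev (map (\<lambda>b. inv (gen b)) bs))"
proof -
  obtain e1 e2 where "length e2 = length e1" "width e1 = 1" "width e2 = 1" "f = pl_map e1 e2"
    using F_tau_eq_pl_map[OF assms] .
  then have "f \<in> gen_group" by (simp add: pl_map_in_gen_group)
  then have "in_normal_form f" by (rule gen_group_normal_form)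
  then obtain as bs where "sorted (map snd as)" "sorted (map snd bs)"
    and "f = inv (gen_word bs) \<circ> gen_word as"
    unfolding in_normal_form_def by blast
  moreover have
    "inv (gen_word bs) \<circ> gen_word as = gprod (map gen as @ rev (map (\<lambda>b. inv (gen b)) bs))"
    by (simp only: gprod_append gprod_inv_gens gen_word_def)
  ultimately show ?thesis by blast
qed

end
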